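(* Let $\Delta$ be a finite, flag, simply connected simplicial complex, with $\mathcal{P}_H$, $q$, $T$, $p_n$, $L$ and $\Phi_n$ as in the context. Then for all $e\in\mathrm{Edge}(\Delta)$ and all $n\in\mathbb{Z}$, $\mathrm{Area}_{\mathcal{P}_H}\big(\Phi_n(e\overline{e})\big)\le(2L+1)|n|+1$.
   Context: $\mathrm{Edge}(\Delta)$ is the set of directed edges of $\Delta$; for $e$ in it, $\iota e$, $\tau e$ are its initial and terminal vertices and $\overline{e}$ is the reversed edge. $e_1\cdot\ldots\cdot e_l$ is a combinatorial path if $\tau e_i=\iota e_{i+1}$, and a combinatorial 1-cycle if also $\tau e_l=\iota e_1$. $\mathcal{P}_H=\langle\mathrm{Edge}(\Delta)\mid\mathcal{R}_H\rangle$ where $\mathcal{R}_H$ consists of the words $e\overline{e}$ ($e\in\mathrm{Edge}(\Delta)$) and $efg$, $e^{-1}f^{-1}g^{-1}$ for every combinatorial 1-cycle $e\cdot f\cdot g$ (a finite presentation of the Bestvina–Brady group $H_\Delta$). For a word $w$ over $\mathrm{Edge}(\Delta)^{\pm1}$ representing the identity, $\mathrm{Area}_{\mathcal{P}_H}(w)$ is the least $m$ such that $w$ is freely equal to $\prod_{i=1}^m x_ir_ix_i^{-1}$ with $r_i\in\mathcal{R}_H^{\pm1}$. For a letter $e$ and $m\in\mathbb{Z}$, $e^m$ denotes the word of $m$ copies of $e$ if $m\ge0$ and $|m|$ copies of $e^{-1}$ if $m<0$. Fix a vertex $q$ and a spanning tree $T$ of the 1-skeleton of $\Delta$; $p_n(u,v)=e_1^n\cdots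 e_l^n$ where $e_1\cdot\ldots\cdot e_l$ is the unique geodesic combinatorial path in $T$ from $u$ to $v$. $L$ is the maximum, over pairs of vertices $u,v$, of the edge-path distance between $u$ and $v$ in $T$. For $n\in\mathbb{Z}$, $\Phi_n$ is the endomorphism of the free monoid on $\mathrm{Edge}(\Delta)^{\pm1}$ given by $\Phi_n(e)=p_n(q,\iota e)\,e^{n+1}\,p_n(\tau e,q)$ and $\Phi_n(e^{-1})=\Phi_n(e)^{-1}$ (formal inverse word). *)

theory Defs
  imports "HOL-Analysis.Analysis"
begin

definition abs_simplicial_complex :: "'v set set \<Rightarrow> bool" where
  "abs_simplicial_complex \<Delta> \<longleftrightarrow>
     (\<forall>\<sigma>\<in>\<Delta>. finite \<sigma> \<and> \<sigma> \<noteq> {}) \<and>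
     (\<forall>\<sigma>\<in>\<Delta>. \<forall>\<tau>. \<tau> \<subseteq> \<sigma> \<and> \<tau> \<noteq> {} \<longrightarrow> \<tau> \<in> \<Delta>)"

definition vertices :: "'v set set \<Rightarrow> 'v set" where
  "vertices \<Delta> = \<Union>\<Delta>"

definition flag :: "'v set set \<Rightarrow> bool" where
  "flag \<Delta> \<longleftrightarrow>
     (\<forall>S. finite S \<and> S \<noteq> {} \<and> S \<subseteq> vertices \<Delta> \<and>
          (\<forall>u\<in>S. \<forall>v\<in>S. u \<noteq> v \<longrightarrow> {u, v} \<in> \<Delta>) \<longrightarrow> S \<in> \<Delta>)"

text \<open>Geometric realization, as the set of barycentric coordinate functions
  (nonnegative, summing to 1, with support a simplex) inside the product space
  of functions from vertices to reals.\<close>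
definition geom_realization :: "'v set set \<Rightarrow> ('v \<Rightarrow> real) set" where
  "geom_realization \<Delta> =
     {x. (\<forall>v. 0 \<le> x v) \<and> {v. x v \<noteq> 0} \<in> \<Delta> \<and> sum x {v. x v \<noteq> 0} = 1}"

definition Edge :: "'v set set \<Rightarrow> ('v \<times> 'v) set" where
  "Edge \<Delta> = {(u, v). u \<noteq> v \<and> {u, v} \<in> \<Delta>}"

abbreviation iota :: "'v \<times> 'v \<Rightarrow> 'v" where "iota e \<equiv> fst e"
abbreviation tau :: "'v \<times> 'v \<Rightarrow> 'v" where "tau e \<equiv> snd e"
definition rev_edge :: "'v \<times> 'v \<Rightarrow> 'v \<times> 'v" where
  "rev_edge e = (snd e, fst e)"

fun comb_path :: "('v \<times> 'v) set \<Rightarrow> 'v \<Rightarrow> 'v \<Rightarrow> ('v \<times> 'v) list \<Rightarrow> bool" where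
  "comb_path E u v [] \<longleftrightarrow> u = v"
| "comb_path E u v (e # es) \<longleftrightarrow> e \<in> E \<and> iota e = u \<and> comb_path E (tau e) v es"

definition comb_1cycle3 :: "'v set set \<Rightarrow> ('v \<times> 'v) \<Rightarrow> ('v \<times> 'v) \<Rightarrow> ('v \<times> 'v) \<Rightarrow> bool" where
  "comb_1cycle3 \<Delta> e f g \<longleftrightarrow> e \<in> Edge \<Delta> \<and> f \<in> Edge \<Delta> \<and> g \<in> Edge \<Delta> \<and>
     tau e = iota f \<and> tau f = iota g \<and> tau g = iota e"

definition tree_edges :: "'v set set \<Rightarrow> ('v \<times> 'v) set" where
  "tree_edges T = {(u, v). u \<noteq> v \<and> {u, v} \<in> T}"

definition spanning_tree :: "'v set set \<Rightarrow> 'v set set \<Rightarrow> bool" where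
  "spanning_tree \<Delta> T \<longleftrightarrow>
     T \<subseteq> {{u, v} | u v. u \<noteq> v \<and> {u, v} \<in> \<Delta>} \<and>
     (\<forall>u\<in>vertices \<Delta>. \<forall>v\<in>vertices \<Delta>. \<exists>es. comb_path (tree_edges T) u v es) \<and>
     \<not> (\<exists>vs. length vs \<ge> 3 \<and> distinct vs \<and>
           (\<forall>i < length vs. {vs ! i, vs ! ((i + 1) mod length vs)} \<in> T))"

definition tree_geodesic :: "'v set set \<Rightarrow> 'v \<Rightarrow> 'v \<Rightarrow> ('v \<times> 'v) list" where
  "tree_geodesic T u v =
     (THE es. comb_path (tree_edges T) u v es \<and>
        (\<forall>es'. comb_path (tree_edges T) u v es' \<longrightarrow> length es \<le> length es'))"

definition tree_L :: "'v set set \<Rightarrow> 'v set set \<Rightarrow> nat" where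
  "tree_L \<Delta> T = Max {length (tree_geodesic T u v) | u v. u \<in> vertices \<Delta> \<and> v \<in> vertices \<Delta>}"

text \<open>A letter is a pair (e, b); b = True means the formal inverse e^{-1}.\<close>
type_synonym 'v letter = "('v \<times> 'v) \<times> bool"
type_synonym 'v word = "'v letter list"

definition inv_letter :: "'v letter \<Rightarrow> 'v letter" where
  "inv_letter a = (fst a, \<not> snd a)"

definition inv_word :: "'v word \<Rightarrow> 'v word" where
  "inv_word w = rev (map inv_letter w)"

definition free_red_step :: "'v word \<Rightarrow> 'v word \<Rightarrow> bool" where
  "free_red_step w w' \<longleftrightarrow> (\<exists>xs ys a. w = xs @ [a, inv_letter a] @ ys \<and> w' = xs @ ys)"

definition freely_equal :: "'v word \<Rightarrow> 'v word \<Rightarrow> bool" where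
  "freely_equal = (symclp free_red_step)\<^sup>*\<^sup>*"

definition word_over :: "'v set set \<Rightarrow> 'v word \<Rightarrow> bool" where
  "word_over \<Delta> w \<longleftrightarrow> (\<forall>a\<in>set w. fst a \<in> Edge \<Delta>)"

definition epow :: "('v \<times> 'v) \<Rightarrow> int \<Rightarrow> 'v word" where
  "epow e m = (if 0 \<le> m then replicate (nat m) (e, False) else replicate (nat (- m)) (e, True))"

definition RH :: "'v set set \<Rightarrow> 'v word set" where
  "RH \<Delta> =
     {[(e, False), (rev_edge e, False)] | e. e \<in> Edge \<Delta>} \<union>
     {[(e, False), (f, False), (g, False)] | e f g. comb_1cycle3 \<Delta> e f g} \<union>
     {[(e, True), (f, True), (g, True)] | e f g. comb_1cycle3 \<Delta> e f g}"

definition Area :: "'v set set \<Rightarrow> 'v word \<Rightarrow> nat" where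
  "Area \<Delta> w = (LEAST m. \<exists>xs rs. length xs = m \<and> length rs = m \<and>
       (\<forall>x\<in>set xs. word_over \<Delta> x) \<and>
       (\<forall>r\<in>set rs. r \<in> RH \<Delta> \<or> inv_word r \<in> RH \<Delta>) \<and>
       freely_equal w (concat (map2 (\<lambda>x r. x @ r @ inv_word x) xs rs)))"

definition p_n :: "'v set set \<Rightarrow> int \<Rightarrow> 'v \<Rightarrow> 'v \<Rightarrow> 'v word" where
  "p_n T n u v = concat (map (\<lambda>e. epow e n) (tree_geodesic T u v))"

definition Phi_letter :: "'v set set \<Rightarrow> 'v \<Rightarrow> int \<Rightarrow> 'v letter \<Rightarrow> 'v word" where
  "Phi_letter T q n a =
     (let e = fst a; w = p_n T n q (iota e) @ epow e (n + 1) @ p_n T n (tau e) q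
      in if snd a then inv_word w else w)"

definition Phi :: "'v set set \<Rightarrow> 'v \<Rightarrow> int \<Rightarrow> 'v word \<Rightarrow> 'v word" where
  "Phi T q n w = concat (map (Phi_letter T q n) w)"

end

theory Submission
  imports Defs
begin

text \<open>Tree geodesics are unique, because two distinct simple walks in a forest with common
  endpoints would close up to a cycle; hence the geodesic from \<open>v\<close> to \<open>u\<close> is the one from
  \<open>u\<close> to \<open>v\<close> traversed backwards. Consequently \<open>\<Phi>\<^sub>n(rev_edge e)\<close> is the mirror image of
  \<open>w = \<Phi>\<^sub>n(e)\<close>, read backwards along reversed edges, and \<open>\<Phi>\<^sub>n(e \<cdot> rev_edge e)\<close> collapses from
  the middle outwards using one relator \<open>f \<cdot> rev_edge f\<close> per letter of \<open>w\<close>. So the area is at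
  most \<open>|w| \<le> 2L|n| + |n + 1|\<close>.\<close>

section \<open>Shortest paths in a spanning tree\<close>

lemma comb_path_append:
  "comb_path E u v (xs @ ys) \<longleftrightarrow> (\<exists>w. comb_path E u w xs \<and> comb_path E w v ys)"
  by (induction xs arbitrary: u) auto

lemma comb_path_edges_subset: "comb_path E u v es \<Longrightarrow> set es \<subseteq> E"
  by (induction es arbitrary: u) auto

lemma comb_path_rev:
  assumes "comb_path E u v es" and "\<And>e. e \<in> E \<Longrightarrow> rev_edge e \<in> E"
  shows "comb_path E v u (rev (map rev_edge es))"
  using assms(1)
proof (induction es arbitrary: u)
  case Nil
  then show ?case by simp
next
  case (Cons a es)
  then have "comb_path E v (snd a) (rev (map rev_edge es))" by simp
  moreover have "comb_path E (snd a) u [rev_edge a]"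
    using Cons.prems assms(2)[of a] by (simp add: rev_edge_def)
  ultimately show ?case by (auto simp: comb_path_append)
qed

lemma comb_path_eq_if_same_vertices:
  "comb_path E u v es \<Longrightarrow> comb_path E u v' es' \<Longrightarrow> map snd es = map snd es' \<Longrightarrow> es = es'"
proof (induction es arbitrary: u es')
  case Nil
  then show ?case by simp
next
  case (Cons a es)
  then obtain b es2 where "es' = b # es2" by (cases es') auto
  with Cons show ?case by (cases a, cases b) auto
qed

lemma comb_path_shorten:
  "comb_path E u v es \<Longrightarrow> \<not> distinct (u # map snd es) \<Longrightarrow>
    \<exists>es'. comb_path E u v es' \<and> length es' < length es"
proof (induction es arbitrary: u)
  case Nil
  then show ?case by simp
next
  case (Cons a es)
  show ?case
  proof (cases "u \<in> set (map snd (a # es))")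
    case True
    then obtain b where "b \<in> set (a # es)" "snd b = u" unfolding set_map by blast
    then obtain xs ys where split: "a # es = xs @ b # ys" by (meson split_list)
    with Cons.prems(1) have "comb_path E u v ys"
      using \<open>snd b = u\<close> by (auto simp: comb_path_append)
    moreover have "length ys < length (a # es)" using split by simp
    ultimately show ?thesis by blast
  next
    case False
    with Cons.prems obtain es' where "comb_path E (snd a) v es'" "length es' < length es"
      using Cons.IH[of "snd a"] by auto
    then show ?thesis using Cons.prems(1) by (intro exI[of _ "a # es'"]) auto
  qed
qed

abbreviation adjacent :: "'v set set \<Rightarrow> 'v \<Rightarrow> 'v \<Rightarrow> bool" where
  "adjacent T a b \<equiv> {a, b} \<in> T"

lemma comb_path_tree_edges_walk:
  "comb_path (tree_edges T) u v es \<Longrightarrow>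
    successively (adjacent T) (u # map snd es) \<and> last (u # map snd es) = v"
  by (induction es arbitrary: u) (auto simp: tree_edges_def successively_Cons)

lemma adjacent_swap: "(\<lambda>a b. adjacent T b a) = adjacent T"
  by (auto simp: fun_eq_iff insert_commute)

definition graph_cycle :: "'v set set \<Rightarrow> 'v list \<Rightarrow> bool" where
  "graph_cycle T vs \<longleftrightarrow> length vs \<ge> 3 \<and> distinct vs \<and>
     (\<forall>i < length vs. {vs ! i, vs ! ((i + 1) mod length vs)} \<in> T)"

lemma spanning_tree_no_cycle: "spanning_tree \<Delta> T \<Longrightarrow> \<not> graph_cycle T vs"
  unfolding spanning_tree_def graph_cycle_def by blast

lemma closed_walk_graph_cycle:
  assumes "successively (adjacent T) vs" and "adjacent T (last vs) (hd vs)"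
    and "distinct vs" and "length vs \<ge> 3"
  shows "graph_cycle T vs"
  unfolding graph_cycle_def
proof (intro conjI allI impI assms(3,4))
  fix i assume i: "i < length vs"
  show "adjacent T (vs ! i) (vs ! ((i + 1) mod length vs))"
  proof (cases "Suc i < length vs")
    case True
    then show ?thesis using successively_nth[OF assms(1) True] by simp
  next
    case False
    then have "i = length vs - 1" and ne: "vs \<noteq> []" using i by auto
    then have "vs ! i = last vs" "(i + 1) mod length vs = 0"
      by (simp_all add: last_conv_nth)
    then show ?thesis using assms(2) ne by (simp add: hd_conv_nth)
  qed
qed

text \<open>Follow the first walk until it first meets the second one, then return along the second.\<close>
lemma forking_simple_walks_cycle:
  assumes walk1: "successively (adjacent T) (x # xs)"
    and walk2: "successively (adjacent T) (x # ys)"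
    and dist1: "distinct (x # xs)" and dist2: "distinct (x # ys)"
    and "xs \<noteq> []" "ys \<noteq> []" and "hd xs \<noteq> hd ys" and "last xs = last ys"
  shows "\<exists>vs. graph_cycle T vs"
proof -
  have "\<exists>z\<in>set xs. z \<in> set ys" using assms(5,6,8) by (metis last_in_set)
  then obtain as z xs' where xs: "xs = as @ z # xs'" and "z \<in> set ys"
    and as_ys: "\<forall>a\<in>set as. a \<notin> set ys"
    using split_list_first_propE[of xs "\<lambda>z. z \<in> set ys"] by blast
  then obtain bs ys' where ys: "ys = bs @ z # ys'" by (meson split_list)
  define vs where "vs = as @ z # rev bs @ [x]"
  have "successively (adjacent T) ((x # as @ [z]) @ xs')"
    "successively (adjacent T) ((x # bs @ [z]) @ ys')"
    using walk1 walk2 unfolding xs ys by simp_all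
  then have walk_as: "successively (adjacent T) (x # as @ [z])"
    and "successively (adjacent T) (x # bs @ [z])"
    unfolding successively_append_iff by blast+
  then have walk_bs: "successively (adjacent T) (rev (x # bs @ [z]))"
    unfolding successively_rev adjacent_swap by blast
  have "successively (adjacent T) vs"
    using walk_as walk_bs unfolding vs_def successively_append_iff[of _ as]
    by (auto simp: successively_append_iff successively_Cons)
  moreover have "adjacent T (last vs) (hd vs)"
    using walk_as by (cases as) (auto simp: vs_def successively_Cons insert_commute)
  moreover have "distinct vs"
    using dist1 dist2 as_ys unfolding vs_def xs ys by auto
  moreover have "length vs \<ge> 3"
    using assms(7) unfolding vs_def xs ys by (cases as; cases bs) auto
  ultimately have "graph_cycle T vs" by (rule closed_walk_graph_cycle)
  then show ?thesis by blast
qed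

lemma simple_walks_unique:
  assumes no_cycle: "\<And>vs. \<not> graph_cycle T vs"
  shows "successively (adjacent T) xs \<Longrightarrow> successively (adjacent T) ys \<Longrightarrow>
    distinct xs \<Longrightarrow> distinct ys \<Longrightarrow> xs \<noteq> [] \<Longrightarrow> ys \<noteq> [] \<Longrightarrow> hd xs = hd ys \<Longrightarrow>
    last xs = last ys \<Longrightarrow> xs = ys"
proof (induction xs arbitrary: ys)
  case Nil
  then show ?case by simp
next
  case (Cons x xs)
  then obtain ys' where ys: "ys = x # ys'" by (cases ys) auto
  consider "xs = []" | "ys' = []" | "xs \<noteq> []" "ys' \<noteq> []" "hd xs = hd ys'"
    | "xs \<noteq> []" "ys' \<noteq> []" "hd xs \<noteq> hd ys'"
    by blast
  then show ?case
  proof cases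
    case 1
    then show ?thesis using Cons.prems ys by (cases ys' rule: rev_cases) auto
  next
    case 2
    then show ?thesis using Cons.prems ys by (cases xs rule: rev_cases) auto
  next
    case 3
    then have "xs = ys'" using Cons.prems ys by (intro Cons.IH) (auto simp: successively_Cons)
    then show ?thesis using ys by simp
  next
    case 4
    then show ?thesis
      using forking_simple_walks_cycle[of T x xs ys'] Cons.prems ys no_cycle by auto
  qed
qed

definition shortest_tree_path :: "'v set set \<Rightarrow> 'v \<Rightarrow> 'v \<Rightarrow> ('v \<times> 'v) list \<Rightarrow> bool" where
  "shortest_tree_path T u v es \<longleftrightarrow> comb_path (tree_edges T) u v es \<and>
     (\<forall>es'. comb_path (tree_edges T) u v es' \<longrightarrow> length es \<le> length es')"

lemma tree_geodesic_eq_The: "tree_geodesic T u v = (THE es. shortest_tree_path T u v es)"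
  unfolding tree_geodesic_def shortest_tree_path_def ..

lemma shortest_tree_path_distinct:
  assumes "shortest_tree_path T u v es"
  shows "distinct (u # map snd es)"
proof (rule ccontr)
  have path: "comb_path (tree_edges T) u v es"
    and least: "\<And>es'. comb_path (tree_edges T) u v es' \<Longrightarrow> length es \<le> length es'"
    using assms unfolding shortest_tree_path_def by auto
  assume "\<not> distinct (u # map snd es)"
  then obtain es' where "comb_path (tree_edges T) u v es'" "length es' < length es"
    using comb_path_shorten[OF path] by blast
  then show False using least[of es'] by simp
qed

lemma shortest_tree_path_unique:
  assumes no_cycle: "\<And>vs. \<not> graph_cycle T vs"
    and shortest: "shortest_tree_path T u v es1" "shortest_tree_path T u v es2"
  shows "es1 = es2"
proof -
  have path1: "comb_path (tree_edges T) u v es1" and path2: "comb_path (tree_edges T) u v es2"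
    using shortest unfolding shortest_tree_path_def by auto
  have "u # map snd es1 = u # map snd es2"
    using comb_path_tree_edges_walk[OF path1] comb_path_tree_edges_walk[OF path2]
      shortest_tree_path_distinct[OF shortest(1)] shortest_tree_path_distinct[OF shortest(2)]
    by (intro simple_walks_unique[OF no_cycle]) auto
  then show ?thesis using comb_path_eq_if_same_vertices[OF path1 path2] by simp
qed

lemma shortest_tree_path_tree_geodesic:
  assumes "spanning_tree \<Delta> T" "u \<in> vertices \<Delta>" "v \<in> vertices \<Delta>"
  shows "shortest_tree_path T u v (tree_geodesic T u v)"
proof -
  obtain es0 where "comb_path (tree_edges T) u v es0"
    using assms unfolding spanning_tree_def by blast
  then obtain es where es: "shortest_tree_path T u v es"
    using ex_has_least_nat[of "comb_path (tree_edges T) u v" es0 length]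
    unfolding shortest_tree_path_def by blast
  moreover have "\<And>es'. shortest_tree_path T u v es' \<Longrightarrow> es' = es"
    using shortest_tree_path_unique[OF spanning_tree_no_cycle[OF assms(1)] _ es] .
  ultimately have "tree_geodesic T u v = es"
    unfolding tree_geodesic_eq_The by (rule the_equality)
  with es show ?thesis by simp
qed

lemma rev_edge_tree_edges: "e \<in> tree_edges T \<Longrightarrow> rev_edge e \<in> tree_edges T"
  unfolding tree_edges_def rev_edge_def by (auto simp: insert_commute)

lemma tree_geodesic_swap:
  assumes "spanning_tree \<Delta> T" "u \<in> vertices \<Delta>" "v \<in> vertices \<Delta>"
  shows "tree_geodesic T v u = rev (map rev_edge (tree_geodesic T u v))"
proof -
  have rev_path: "comb_path (tree_edges T) y x (rev (map rev_edge es))"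
    if "comb_path (tree_edges T) x y es" for x y es
    using comb_path_rev[OF that rev_edge_tree_edges] .
  have "shortest_tree_path T u v (tree_geodesic T u v)"
    by (rule shortest_tree_path_tree_geodesic[OF assms])
  then have "shortest_tree_path T v u (rev (map rev_edge (tree_geodesic T u v)))"
    unfolding shortest_tree_path_def using rev_path by fastforce
  then show ?thesis
    by (rule shortest_tree_path_unique[OF spanning_tree_no_cycle[OF assms(1)]
          shortest_tree_path_tree_geodesic[OF assms(1,3,2)]])
qed

lemma tree_edges_subset_Edge:
  assumes "spanning_tree \<Delta> T"
  shows "tree_edges T \<subseteq> Edge \<Delta>"
proof
  fix x assume "x \<in> tree_edges T"
  then obtain a b where x: "x = (a, b)" "a \<noteq> b" "{a, b} \<in> T" by (auto simp: tree_edges_def)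
  moreover have "T \<subseteq> {{u, v} | u v. u \<noteq> v \<and> {u, v} \<in> \<Delta>}"
    using assms unfolding spanning_tree_def by blast
  ultimately have "{a, b} \<in> \<Delta>" by auto
  with x show "x \<in> Edge \<Delta>" by (simp add: Edge_def)
qed

lemma tree_geodesic_edges:
  assumes "spanning_tree \<Delta> T" "u \<in> vertices \<Delta>" "v \<in> vertices \<Delta>"
  shows "set (tree_geodesic T u v) \<subseteq> Edge \<Delta>"
  using shortest_tree_path_tree_geodesic[OF assms] comb_path_edges_subset
    tree_edges_subset_Edge[OF assms(1)] unfolding shortest_tree_path_def by (meson order_trans)

lemma length_tree_geodesic_le_tree_L:
  assumes "abs_simplicial_complex \<Delta>" "finite \<Delta>" "u \<in> vertices \<Delta>" "v \<in> vertices \<Delta>"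
  shows "length (tree_geodesic T u v) \<le> tree_L \<Delta> T"
proof -
  have "finite (vertices \<Delta>)"
    unfolding vertices_def
    by (rule finite_Union) (use assms(1,2) in \<open>auto simp: abs_simplicial_complex_def\<close>)
  have "finite {length (tree_geodesic T u v) | u v. u \<in> vertices \<Delta> \<and> v \<in> vertices \<Delta>}"
    by (rule finite_image_set2) (use \<open>finite (vertices \<Delta>)\<close> in simp_all)
  then show ?thesis unfolding tree_L_def by (rule Max_ge) (use assms(3,4) in blast)
qed

section \<open>The words \<open>\<Phi>\<^sub>n(e)\<close>\<close>

lemma Edge_vertices:
  assumes "e \<in> Edge \<Delta>"
  shows "fst e \<in> vertices \<Delta>" "snd e \<in> vertices \<Delta>"
  using assms unfolding Edge_def vertices_def by auto

lemma rev_edge_Edge: "e \<in> Edge \<Delta> \<Longrightarrow> rev_edge e \<in> Edge \<Delta>"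
  unfolding Edge_def rev_edge_def by (auto simp: insert_commute)

lemma rev_edge_rev_edge [simp]: "rev_edge (rev_edge e) = e"
  by (simp add: rev_edge_def)

lemma fst_rev_edge [simp]: "fst (rev_edge e) = snd e"
  and snd_rev_edge [simp]: "snd (rev_edge e) = fst e"
  by (simp_all add: rev_edge_def)

text \<open>Since \<open>e \<cdot> rev_edge e\<close> is a relator, \<open>mirror_word w\<close> represents the inverse of \<open>w\<close>.\<close>
definition mirror_word :: "'v word \<Rightarrow> 'v word" where
  "mirror_word w = rev (map (\<lambda>a. (rev_edge (fst a), snd a)) w)"

lemma mirror_word_append: "mirror_word (u @ w) = mirror_word w @ mirror_word u"
  by (simp add: mirror_word_def)

lemma mirror_word_concat: "mirror_word (concat ws) = concat (rev (map mirror_word ws))"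
  by (induction ws) (simp_all add: mirror_word_append, simp add: mirror_word_def)

lemma mirror_word_epow: "mirror_word (epow e m) = epow (rev_edge e) m"
  by (simp add: mirror_word_def epow_def)

lemma p_n_swap:
  assumes "spanning_tree \<Delta> T" "u \<in> vertices \<Delta>" "v \<in> vertices \<Delta>"
  shows "p_n T n v u = mirror_word (p_n T n u v)"
  unfolding p_n_def tree_geodesic_swap[OF assms] mirror_word_concat
  by (simp add: rev_map mirror_word_epow comp_def)

lemma Phi_edge_rev_edge:
  assumes "spanning_tree \<Delta> T" "q \<in> vertices \<Delta>" "e \<in> Edge \<Delta>"
  shows "Phi T q n [(e, False), (rev_edge e, False)] =
    Phi_letter T q n (e, False) @ mirror_word (Phi_letter T q n (e, False))"
  using p_n_swap[OF assms(1,2) Edge_vertices(1)[OF assms(3)]]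
    p_n_swap[OF assms(1) Edge_vertices(2)[OF assms(3)] assms(2)]
  by (simp add: Phi_def Phi_letter_def mirror_word_append mirror_word_epow)

lemma length_epow: "length (epow e m) = nat \<bar>m\<bar>"
  by (simp add: epow_def)

lemma fst_epow: "a \<in> set (epow e m) \<Longrightarrow> fst a = e"
  by (auto simp: epow_def split: if_splits)

lemma length_p_n: "length (p_n T n u v) = length (tree_geodesic T u v) * nat \<bar>n\<bar>"
  by (simp add: p_n_def length_concat length_epow comp_def sum_list_triv)

lemma word_over_p_n:
  assumes "spanning_tree \<Delta> T" "u \<in> vertices \<Delta>" "v \<in> vertices \<Delta>"
  shows "word_over \<Delta> (p_n T n u v)"
  using tree_geodesic_edges[OF assms] by (auto simp: word_over_def p_n_def dest!: fst_epow)

lemma word_over_Phi_letter: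
  assumes "spanning_tree \<Delta> T" "q \<in> vertices \<Delta>" "e \<in> Edge \<Delta>"
  shows "word_over \<Delta> (Phi_letter T q n (e, False))"
  using assms word_over_p_n[OF assms(1,2) Edge_vertices(1)[OF assms(3)]]
    word_over_p_n[OF assms(1) Edge_vertices(2)[OF assms(3)] assms(2)]
  by (auto simp: Phi_letter_def word_over_def dest!: fst_epow)

lemma length_Phi_letter_le:
  assumes "abs_simplicial_complex \<Delta>" "finite \<Delta>" "q \<in> vertices \<Delta>" "e \<in> Edge \<Delta>"
  shows "length (Phi_letter T q n (e, False)) \<le> (2 * tree_L \<Delta> T + 1) * nat \<bar>n\<bar> + 1"
proof -
  have "length (p_n T n q (fst e)) \<le> tree_L \<Delta> T * nat \<bar>n\<bar>"
    "length (p_n T n (snd e) q) \<le> tree_L \<Delta> T * nat \<bar>n\<bar>"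
    unfolding length_p_n
    using length_tree_geodesic_le_tree_L[OF assms(1,2)] assms(3) Edge_vertices[OF assms(4)]
    by (simp_all add: mult_le_mono1)
  moreover have "length (epow e (n + 1)) \<le> nat \<bar>n\<bar> + 1"
    unfolding length_epow by linarith
  ultimately show ?thesis by (simp add: Phi_letter_def algebra_simps)
qed

section \<open>Area of a word followed by its mirror image\<close>

lemma freely_equal_trans [trans]:
  "freely_equal u v \<Longrightarrow> freely_equal v w \<Longrightarrow> freely_equal u w"
  unfolding freely_equal_def by (rule rtranclp_trans)

lemma free_red_step_append_left: "free_red_step u w \<Longrightarrow> free_red_step (c @ u) (c @ w)"
  unfolding free_red_step_def by (metis append.assoc)

lemma freely_equal_append_left: "freely_equal u w \<Longrightarrow> freely_equal (c @ u) (c @ w)"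
  unfolding freely_equal_def
proof (induction rule: rtranclp_induct)
  case base
  then show ?case by simp
next
  case (step v w)
  then have "symclp free_red_step (c @ v) (c @ w)"
    using free_red_step_append_left unfolding symclp_def by blast
  with step.IH show ?case by simp
qed

lemma freely_equal_insert_inverse: "freely_equal (u @ w) (u @ inv_word v @ v @ w)"
proof (induction v)
  case Nil
  then show ?case by (simp add: freely_equal_def inv_word_def)
next
  case (Cons a v)
  have "free_red_step (u @ inv_word (a # v) @ (a # v) @ w) (u @ inv_word v @ v @ w)"
    unfolding free_red_step_def
    by (rule exI[of _ "u @ inv_word v"], rule exI[of _ "v @ w"], rule exI[of _ "inv_letter a"])
      (simp add: inv_word_def inv_letter_def)
  then have "freely_equal (u @ inv_word v @ v @ w) (u @ inv_word (a # v) @ (a # v) @ w)"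
    unfolding freely_equal_def by (simp add: symclp_def r_into_rtranclp)
  with Cons.IH show ?case by (rule freely_equal_trans)
qed

definition conjugates_product :: "'v word list \<Rightarrow> 'v word list \<Rightarrow> 'v word" where
  "conjugates_product xs rs = concat (map2 (\<lambda>x r. x @ r @ inv_word x) xs rs)"

definition van_Kampen_decomposition ::
  "'v set set \<Rightarrow> 'v word \<Rightarrow> 'v word list \<Rightarrow> 'v word list \<Rightarrow> bool" where
  "van_Kampen_decomposition \<Delta> w xs rs \<longleftrightarrow> length xs = length rs \<and>
     (\<forall>x\<in>set xs. word_over \<Delta> x) \<and> (\<forall>r\<in>set rs. r \<in> RH \<Delta> \<or> inv_word r \<in> RH \<Delta>) \<and>
     freely_equal w (conjugates_product xs rs)"

lemma Area_le_decomposition_length: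
  "van_Kampen_decomposition \<Delta> w xs rs \<Longrightarrow> Area \<Delta> w \<le> length rs"
  unfolding Area_def van_Kampen_decomposition_def conjugates_product_def
  by (rule Least_le) auto

lemma rev_edge_relator_RH:
  assumes "e \<in> Edge \<Delta>"
  shows "[(e, b), (rev_edge e, b)] \<in> RH \<Delta> \<or> inv_word [(e, b), (rev_edge e, b)] \<in> RH \<Delta>"
proof (cases b)
  case False
  then show ?thesis using assms unfolding RH_def by blast
next
  case True
  then have "inv_word [(e, b), (rev_edge e, b)] =
      [(rev_edge e, False), (rev_edge (rev_edge e), False)]"
    by (simp add: inv_word_def inv_letter_def)
  then show ?thesis using rev_edge_Edge[OF assms] unfolding RH_def by blast
qed

text \<open>Cancel the innermost pair \<open>a \<cdot> rev_edge a\<close> of \<open>u a \<cdot> mirror_word (u a)\<close> by the relator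
  conjugated by \<open>u\<close>; what remains is \<open>u \<cdot> mirror_word u\<close>.\<close>
lemma van_Kampen_decomposition_mirror:
  "word_over \<Delta> u \<Longrightarrow>
    \<exists>xs rs. van_Kampen_decomposition \<Delta> (u @ mirror_word u) xs rs \<and> length rs = length u"
proof (induction u rule: rev_induct)
  case Nil
  then show ?case
    by (auto simp: van_Kampen_decomposition_def conjugates_product_def freely_equal_def
        mirror_word_def)
next
  case (snoc a u)
  obtain e b where a: "a = (e, b)" by (cases a)
  have "word_over \<Delta> u" and e: "e \<in> Edge \<Delta>"
    using snoc.prems a by (auto simp: word_over_def)
  then obtain xs rs where decomp: "van_Kampen_decomposition \<Delta> (u @ mirror_word u) xs rs"
    and len: "length rs = length u"
    using snoc.IH by blast
  define r where "r = [(e, b), (rev_edge e, b)]"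
  have "(u @ [a]) @ mirror_word (u @ [a]) = u @ r @ mirror_word u"
    by (simp add: a r_def mirror_word_def)
  also have "freely_equal \<dots> ((u @ r @ inv_word u) @ u @ mirror_word u)"
    using freely_equal_insert_inverse[of "u @ r" "mirror_word u" u] by simp
  also have "freely_equal \<dots> ((u @ r @ inv_word u) @ conjugates_product xs rs)"
    using decomp unfolding van_Kampen_decomposition_def by (blast intro: freely_equal_append_left)
  finally have "freely_equal ((u @ [a]) @ mirror_word (u @ [a]))
      (conjugates_product (u # xs) (r # rs))"
    by (simp add: conjugates_product_def)
  then have "van_Kampen_decomposition \<Delta> ((u @ [a]) @ mirror_word (u @ [a])) (u # xs) (r # rs)"
    using decomp rev_edge_relator_RH[OF e] \<open>word_over \<Delta> u\<close>
    unfolding van_Kampen_decomposition_def r_def by auto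
  with len show ?case by fastforce
qed

lemma Area_append_mirror_word_le:
  "word_over \<Delta> u \<Longrightarrow> Area \<Delta> (u @ mirror_word u) \<le> length u"
  using van_Kampen_decomposition_mirror Area_le_decomposition_length by metis

theorem lemma4p2:
  fixes \<Delta> T :: "'v set set" and q :: 'v and e :: "'v \<times> 'v" and n :: int
  assumes "abs_simplicial_complex \<Delta>" and "finite \<Delta>" and "flag \<Delta>"
    and "simply_connected (geom_realization \<Delta>)"
    and "q \<in> vertices \<Delta>" and "spanning_tree \<Delta> T"
    and "e \<in> Edge \<Delta>"
  shows "Area \<Delta> (Phi T q n [(e, False), (rev_edge e, False)])
           \<le> (2 * tree_L \<Delta> T + 1) * nat \<bar>n\<bar> + 1"
proof -
  let ?w = "Phi_letter T q n (e, False)"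
  have "Area \<Delta> (Phi T q n [(e, False), (rev_edge e, False)]) = Area \<Delta> (?w @ mirror_word ?w)"
    using Phi_edge_rev_edge[OF assms(6,5,7)] by simp
  also have "\<dots> \<le> length ?w"
    using word_over_Phi_letter[OF assms(6,5,7)] by (rule Area_append_mirror_word_le)
  also have "\<dots> \<le> (2 * tree_L \<Delta> T + 1) * nat \<bar>n\<bar> + 1"
    using length_Phi_letter_le[OF assms(1,2,5,7)] .
  finally show ?thesis .
qed

end
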